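(* The set \[ \left\{\frac{x}{\big(\mu_{\mathfrak C}([0,x])\big)^{\log_s p}}:\ x\in \mathfrak C\cap\left[\tfrac{h(1)}{p},1\right]\right\} \] is exactly the set of accumulation points of the sequence $(b_n)_{n\ge 1}$.
   Context: Fix integers $p\ge 3$ and $2\le s<p$, and a set $A\subset\{0,1,\dots,p-1\}$ with $\#A=s$. Let $h:\{0,1,\dots,s-1\}\to A$ be the unique strictly increasing bijection. For a positive integer $n$ with base-$s$ expansion $n=\sum_{i=0}^k\varepsilon_i s^i$ ($\varepsilon_i\in\{0,\dots,s-1\}$, $\varepsilon_k\ne 0$), put $a_n=\sum_{i=0}^k h(\varepsilon_i)p^i$ (the integer whose base-$p$ digits are $h(\varepsilon_k),\dots,h(\varepsilon_0)$). Let $b_n=a_n/n^{\log_s p}$ for $n\ge1$. Let $\mathfrak C=\{x\in[0,1]:$ all digits in the base-$p$ expansion of $x$ belong to $A\}$, the attractor of the maps $S_i(x)=(x+h(i))/p$, $0\le i\le s-1$, and let $\mu_{\mathfrak C}$ be the unique Borel probability measure with $\mu_{\mathfrak C}=\sum_{i=0}^{s-1}\frac1s\,\mu_{\mathfrak C}\circ S_i^{-1}$. An accumulation point of $(b_n)$ is a real number that is the limit of $b_{n_k}$ for some strictly increasing sequence of indices $(n_k)$. *)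

theory Defs
  imports "HOL-Probability.Probability"
begin

definition hmap :: "nat set \<Rightarrow> nat \<Rightarrow> nat" where
  "hmap A i = sorted_list_of_set A ! i"

text \<open>a_n: replace the base-s digits of n by their images under h and read in base p.\<close>
function aseq :: "nat \<Rightarrow> nat \<Rightarrow> nat set \<Rightarrow> nat \<Rightarrow> nat" where
  "aseq p s A n = (if n = 0 \<or> s < 2 then 0
                   else hmap A (n mod s) + p * aseq p s A (n div s))"
  by auto
termination
  by (relation "Wellfounded.measure (\<lambda>(p, s, A, n). n)") auto

definition bseq :: "nat \<Rightarrow> nat \<Rightarrow> nat set \<Rightarrow> nat \<Rightarrow> real" where
  "bseq p s A n = real (aseq p s A n) / (real n) powr (log (real s) (real p))"

text \<open>The Cantor-type set: points of [0,1] having a base-p expansion with all digits in A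
  (equivalently, the attractor of the maps S_i).\<close>
definition cantor_set :: "nat \<Rightarrow> nat set \<Rightarrow> real set" where
  "cantor_set p A = {x. \<exists>d::nat \<Rightarrow> nat. (\<forall>i. d i \<in> A) \<and>
                          x = (\<Sum>i. real (d i) / real p ^ (Suc i))}"

definition simil :: "nat \<Rightarrow> nat set \<Rightarrow> nat \<Rightarrow> real \<Rightarrow> real" where
  "simil p A i x = (x + real (hmap A i)) / real p"

definition self_similar_measure :: "nat \<Rightarrow> nat \<Rightarrow> nat set \<Rightarrow> real measure \<Rightarrow> bool" where
  "self_similar_measure p s A \<mu> \<longleftrightarrow>
     prob_space \<mu> \<and> sets \<mu> = sets borel \<and>
     (\<forall>B \<in> sets borel. measure \<mu> B = (\<Sum>i<s. measure \<mu> (simil p A i -` B)) / real s)"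

definition accumulation_points :: "(nat \<Rightarrow> real) \<Rightarrow> real set" where
  "accumulation_points b = {L. \<exists>r. strict_mono r \<and> (\<forall>k. 1 \<le> r k) \<and> (\<lambda>k. b (r k)) \<longlonglongrightarrow> L}"

end

theory Submission
  imports Defs "HOL-Library.Diagonal_Subsequence"
begin

text \<open>
  Write G for the distribution function of \<mu> and \<theta> = log s p, so that (s^k) powr \<theta> = p^k.
  Self-similarity makes G undo the digit substitution: G maps the point of the Cantor set with
  base-p digits h(e_0) h(e_1) ... to the number with base-s digits e_0 e_1 ....  If n has
  base-s digits e_0 ... e_k (leading digit first), then b_n = X_k / T_k powr \<theta>, where
  X_k = a_n / p^(k+1) and T_k = n / s^(k+1) are the truncations of these two expansions.
  Hence along the prefixes of a digit sequence with e_0 \<ge> 1 the sequence b tends to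
  x / G(x) powr \<theta>, and conversely a diagonal argument extracts from every convergent
  subsequence of b a digit sequence whose prefixes it follows.  The only point x \<ge> h(1)/p of
  the Cantor set missed in this way is x = h(1)/p when 0 \<notin> A; its value is h(1), which is a
  limit point for a different reason: b is at least h(1) at the powers of s, is below h(1) just
  before the next power, and from n to n + 1 it shrinks at most by the factor
  ((n + 1) / n) powr \<theta>.
\<close>

section \<open>Base expansions and their prefixes\<close>

definition base_expansion :: "nat \<Rightarrow> (nat \<Rightarrow> nat) \<Rightarrow> real" where
  "base_expansion b d = (\<Sum>i. real (d i) / real b ^ Suc i)"

primrec prefix_value :: "nat \<Rightarrow> (nat \<Rightarrow> nat) \<Rightarrow> nat \<Rightarrow> nat" where
  "prefix_value b d 0 = d 0"
| "prefix_value b d (Suc k) = b * prefix_value b d k + d (Suc k)"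

lemma sums_divide_power_Suc:
  fixes q c :: real
  assumes "1 < q"
  shows "(\<lambda>i. c / q ^ Suc i) sums (c / (q - 1))"
proof -
  have "(\<lambda>i. c / q * (1 / q) ^ i) sums (c / q * (1 / (1 - 1 / q)))"
    using assms by (intro sums_mult geometric_sums) auto
  moreover have "c / q * (1 / (1 - 1 / q)) = c / (q - 1)"
    using assms by (simp add: field_simps)
  moreover have "(\<lambda>i. c / q * (1 / q) ^ i) = (\<lambda>i. c / q ^ Suc i)"
    by (simp add: power_divide)
  ultimately show ?thesis
    by (simp only:)
qed

lemma base_expansion_const:
  assumes "2 \<le> b"
  shows "base_expansion b (\<lambda>_. c) = real c / (real b - 1)"
  using sums_divide_power_Suc[of "real b" "real c"] assms
  unfolding base_expansion_def by (simp add: sums_iff)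

lemma
  assumes b: "2 \<le> b" and d: "\<And>i. d i < b"
  shows summable_base_expansion: "summable (\<lambda>i. real (d i) / real b ^ Suc i)"
    and base_expansion_nonneg: "0 \<le> base_expansion b d"
    and base_expansion_le_1: "base_expansion b d \<le> 1"
proof -
  have b1: "1 < real b" using b by simp
  have le: "real (d i) / real b ^ Suc i \<le> (real b - 1) / real b ^ Suc i" for i
    using d[of i] by (intro divide_right_mono) (auto simp: less_Suc_eq_le[symmetric] of_nat_diff)
  have geo: "(\<lambda>i. (real b - 1) / real b ^ Suc i) sums 1"
    using sums_divide_power_Suc[OF b1, of "real b - 1"] b1 by simp
  show sum: "summable (\<lambda>i. real (d i) / real b ^ Suc i)"
    using le by (intro summable_comparison_test'[OF sums_summable[OF geo]]) auto
  show "0 \<le> base_expansion b d"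
    unfolding base_expansion_def by (intro suminf_nonneg[OF sum]) simp
  show "base_expansion b d \<le> 1"
    unfolding base_expansion_def
    using suminf_le[OF le sum sums_summable[OF geo]] sums_unique[OF geo] by simp
qed

lemma base_expansion_split:
  assumes "2 \<le> b" and "\<And>i. d i < b"
  shows "base_expansion b d
    = (\<Sum>i<m. real (d i) / real b ^ Suc i) + base_expansion b (\<lambda>i. d (i + m)) / real b ^ m"
proof -
  have "(\<Sum>i. real (d (i + m)) / real b ^ Suc (i + m))
      = base_expansion b (\<lambda>i. d (i + m)) / real b ^ m"
    unfolding base_expansion_def
    using suminf_divide[OF summable_base_expansion[of b "\<lambda>i. d (i + m)"], of "real b ^ m"] assms
    by (simp add: power_add field_simps)
  then show ?thesis
    using suminf_split_initial_segment[OF summable_base_expansion[of b d, OF assms], of m]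
    unfolding base_expansion_def by simp
qed

lemma base_expansion_Suc:
  assumes "2 \<le> b" and "\<And>i. d i < b"
  shows "base_expansion b d = (real (d 0) + base_expansion b (\<lambda>i. d (Suc i))) / real b"
  using base_expansion_split[of b d 1, OF assms] by (simp add: add_divide_distrib)

lemma
  assumes "2 \<le> b" and "\<And>i. d i < b"
  shows base_expansion_ge_prefix_sum: "(\<Sum>i<m. real (d i) / real b ^ Suc i) \<le> base_expansion b d"
    and base_expansion_le_prefix_sum:
      "base_expansion b d \<le> (\<Sum>i<m. real (d i) / real b ^ Suc i) + 1 / real b ^ m"
  using base_expansion_split[of b d m, OF assms] assms
    base_expansion_nonneg[of b "\<lambda>i. d (i + m)"] base_expansion_le_1[of b "\<lambda>i. d (i + m)"]
  by (auto intro!: divide_right_mono)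

lemma base_expansion_ge_first_digit:
  assumes "2 \<le> b" and "\<And>i. d i < b"
  shows "real (d 0) / real b \<le> base_expansion b d"
  using base_expansion_ge_prefix_sum[of b d 1, OF assms] by simp

lemma base_expansion_close:
  assumes "2 \<le> b" and "\<And>i. d i < b" and "\<And>i. d' i < b" and "\<And>i. i < m \<Longrightarrow> d i = d' i"
  shows "\<bar>base_expansion b d - base_expansion b d'\<bar> \<le> 1 / real b ^ m"
proof -
  have "(\<Sum>i<m. real (d i) / real b ^ Suc i) = (\<Sum>i<m. real (d' i) / real b ^ Suc i)"
    using assms(4) by (intro sum.cong) auto
  then show ?thesis
    using base_expansion_ge_prefix_sum[of b d m, OF assms(1,2)]
      base_expansion_le_prefix_sum[of b d m, OF assms(1,2)]
      base_expansion_ge_prefix_sum[of b d' m, OF assms(1,3)]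
      base_expansion_le_prefix_sum[of b d' m, OF assms(1,3)]
    by (simp add: abs_le_iff)
qed

lemma prefix_value_eq_sum:
  assumes "0 < b"
  shows "real (prefix_value b d k) / real b ^ Suc k = (\<Sum>i<Suc k. real (d i) / real b ^ Suc i)"
proof (induction k)
  case (Suc k)
  have "real (prefix_value b d (Suc k)) / real b ^ Suc (Suc k)
      = real (prefix_value b d k) / real b ^ Suc k + real (d (Suc k)) / real b ^ Suc (Suc k)"
    using assms by (simp add: field_simps)
  then show ?case using Suc by simp
qed simp

lemma base_expansion_prefix_value_approx:
  assumes "2 \<le> b" and "\<And>i. d i < b"
  shows "\<bar>base_expansion b d - real (prefix_value b d k) / real b ^ Suc k\<bar> \<le> 1 / real b ^ Suc k"
  using base_expansion_ge_prefix_sum[of b d "Suc k", OF assms]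
    base_expansion_le_prefix_sum[of b d "Suc k", OF assms] prefix_value_eq_sum[of b d k] assms(1)
  by (simp add: abs_le_iff)

lemma prefix_value_less:
  assumes "\<And>i. d i < b"
  shows "prefix_value b d k < b ^ Suc k"
proof (induction k)
  case (Suc k)
  have "prefix_value b d (Suc k) < b * (prefix_value b d k + 1)"
    using assms[of "Suc k"] by simp
  also have "\<dots> \<le> b * b ^ Suc k"
    using Suc by (intro mult_left_mono) auto
  finally show ?case by simp
qed (use assms in simp)

lemma prefix_value_ge: "d 0 * b ^ k \<le> prefix_value b d k"
proof (induction k)
  case (Suc k)
  have "d 0 * b ^ Suc k = b * (d 0 * b ^ k)" by simp
  also have "\<dots> \<le> b * prefix_value b d k" using Suc by (rule mult_le_mono2)
  also have "\<dots> \<le> prefix_value b d (Suc k)" by simp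
  finally show ?case .
qed simp

lemma prefix_value_pos:
  assumes "0 < b" and "1 \<le> d 0"
  shows "0 < prefix_value b d k"
proof -
  have "1 \<le> d 0 * b ^ k"
    using assms by simp
  then show ?thesis
    using prefix_value_ge[of d b k] by linarith
qed

lemma strict_mono_prefix_value:
  assumes "2 \<le> b" and "1 \<le> d 0"
  shows "strict_mono (prefix_value b d)"
proof (rule strict_monoI_Suc)
  fix k
  have "0 < prefix_value b d k"
    using assms by (intro prefix_value_pos) auto
  moreover have "2 * prefix_value b d k \<le> b * prefix_value b d k"
    using assms(1) by (rule mult_le_mono1)
  moreover have "prefix_value b d (Suc k) = b * prefix_value b d k + d (Suc k)" by simp
  ultimately show "prefix_value b d k < prefix_value b d (Suc k)" by linarith
qed

lemma prefix_value_cong: "(\<And>i. i \<le> k \<Longrightarrow> d i = d' i) \<Longrightarrow> prefix_value b d k = prefix_value b d' k"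
  by (induction k) auto

lemma prefix_value_unit: "prefix_value b (\<lambda>i. if i = 0 then 1 else 0) k = b ^ k"
  by (induction k) auto

lemma prefix_value_exists:
  assumes "2 \<le> b" and "1 \<le> n"
  shows "\<exists>d k. (\<forall>i. d i < b) \<and> 1 \<le> d 0 \<and> prefix_value b d k = n"
  using assms(2)
proof (induction n rule: less_induct)
  case (less n)
  show ?case
  proof (cases "n < b")
    case True
    then show ?thesis
      using less.prems assms(1) by (intro exI[of _ "\<lambda>i. if i = 0 then n else 0"] exI[of _ 0]) auto
  next
    case False
    then have "1 \<le> n div b"
      using div_le_mono[of b n b] assms(1) by simp
    moreover have "n div b < n"
      using assms(1) less.prems by simp
    ultimately obtain d k where d: "\<forall>i. d i < b" "1 \<le> d 0" "prefix_value b d k = n div b"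
      using less.IH by blast
    define d' where "d' = d(Suc k := n mod b)"
    have "prefix_value b d' k = n div b"
      using d(3) prefix_value_cong[of k d' d] unfolding d'_def by simp
    then have "prefix_value b d' (Suc k) = n"
      unfolding d'_def by simp
    moreover have "\<forall>i. d' i < b" and "1 \<le> d' 0"
      using d assms(1) unfolding d'_def by auto
    ultimately show ?thesis by blast
  qed
qed

lemma prefix_value_tendsto:
  assumes b: "2 \<le> b" and D: "\<And>j i. D j i < b" and d: "\<And>i. d i < b"
    and agree: "\<And>m. eventually (\<lambda>j. \<forall>i<m. D j i = d i) sequentially"
    and K: "filterlim K at_top sequentially"
  shows "(\<lambda>j. real (prefix_value b (D j) (K j)) / real b ^ Suc (K j)) \<longlonglongrightarrow> base_expansion b d"
proof (rule tendstoI)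
  fix \<epsilon> :: real
  assume "0 < \<epsilon>"
  have "(\<lambda>m. 1 / real b ^ m) \<longlonglongrightarrow> 0"
    using b by (intro LIMSEQ_divide_realpow_zero) auto
  then have "eventually (\<lambda>m. 1 / real b ^ m < \<epsilon> / 2) sequentially"
    using \<open>0 < \<epsilon>\<close> by (intro order_tendstoD(2)) auto
  then obtain m where m: "1 / real b ^ m < \<epsilon> / 2"
    unfolding eventually_sequentially by blast
  have "eventually (\<lambda>j. m \<le> K j \<and> (\<forall>i<m. D j i = d i)) sequentially"
    using K agree[of m] unfolding filterlim_at_top by (auto intro: eventually_conj)
  then show "eventually (\<lambda>j. dist (real (prefix_value b (D j) (K j)) / real b ^ Suc (K j))
      (base_expansion b d) < \<epsilon>) sequentially"
  proof eventually_elim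
    case (elim j)
    have "1 / real b ^ Suc (K j) \<le> 1 / real b ^ m"
      using b elim by (intro divide_left_mono power_increasing) auto
    then have "\<bar>base_expansion b (D j) - real (prefix_value b (D j) (K j)) / real b ^ Suc (K j)\<bar>
        \<le> 1 / real b ^ m"
      using base_expansion_prefix_value_approx[of b "D j" "K j", OF b D] by linarith
    moreover have "\<bar>base_expansion b (D j) - base_expansion b d\<bar> \<le> 1 / real b ^ m"
      using elim by (intro base_expansion_close[OF b D d]) auto
    ultimately show ?case
      using m by (simp add: dist_real_def abs_le_iff abs_less_iff)
  qed
qed

lemma subseq_with_stable_prefixes:
  fixes E :: "nat \<Rightarrow> nat \<Rightarrow> nat"
  assumes "\<And>j i. E j i < b"
  shows "\<exists>r e. strict_mono r \<and> (\<forall>i j. i < j \<longrightarrow> E (r j) i = e i)"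
proof -
  define P where "P i r \<longleftrightarrow> (\<forall>j. E (r j) i = E (r 0) i)" for i and r :: "nat \<Rightarrow> nat"
  interpret subseqs P
  proof
    fix i and \<sigma> :: "nat \<Rightarrow> nat"
    have "finite (range (\<lambda>j. E (\<sigma> j) i))"
      by (rule finite_subset[of _ "{..<b}"]) (use assms in auto)
    then have "\<exists>l\<in>UNIV. infinite {j \<in> UNIV. E (\<sigma> j) i = E (\<sigma> l) i}"
      by (rule pigeonhole_infinite[OF infinite_UNIV_nat])
    then obtain l where "infinite {j. E (\<sigma> j) i = E (\<sigma> l) i}"
      by auto
    then obtain r :: "nat \<Rightarrow> nat" where "strict_mono r" "\<forall>j. E (\<sigma> (r j)) i = E (\<sigma> l) i"
      using infinite_enumerate by blast
    then show "\<exists>r. strict_mono r \<and> P i (\<sigma> \<circ> r)"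
      unfolding P_def by auto
  qed
  have P: "P i (diagseq \<circ> (+) (Suc i))" for i
    by (rule diagseq_holds) (simp add: P_def, metis)
  have stable: "E (diagseq j) i = E (diagseq (Suc i)) i" if "i < j" for i j
  proof -
    have "E (diagseq (Suc i + (j - Suc i))) i = E (diagseq (Suc i + 0)) i"
      using P[of i] unfolding P_def comp_def by blast
    then show ?thesis using that by simp
  qed
  show ?thesis
    by (rule exI[of _ diagseq], rule exI[of _ "\<lambda>i. E (diagseq (Suc i)) i"])
      (use subseq_diagseq stable in blast)
qed

lemma tendsto_last_point_above:
  fixes b c :: "nat \<Rightarrow> real" and m M :: "nat \<Rightarrow> nat"
  assumes c: "c \<longlonglongrightarrow> 1" and c_nonneg: "\<And>n. 0 \<le> c n" and step: "\<And>n. b n \<le> c n * b (Suc n)"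
    and above: "\<And>k. H \<le> b (m k)" and below: "\<And>k. b (M k) < H"
    and m_le_M: "\<And>k. m k \<le> M k" and M_less_m: "\<And>k. M k < m (Suc k)"
  shows "\<exists>r. strict_mono r \<and> (\<forall>k. m k \<le> r k) \<and> (\<lambda>k. b (r k)) \<longlonglongrightarrow> H"
proof -
  \<comment> \<open>r k is the last point of [m k, M k] where b is still at least H; one step later b is below H.\<close>
  define S where "S k = {n. m k \<le> n \<and> n \<le> M k \<and> H \<le> b n}" for k
  define r where "r k = Max (S k)" for k
  have fin: "finite (S k)" for k
    unfolding S_def by (rule finite_subset[of _ "{..M k}"]) auto
  have r: "m k \<le> r k" "r k < M k" "H \<le> b (r k)" "b (Suc (r k)) < H" for k
  proof -
    have "m k \<in> S k" using above m_le_M unfolding S_def by auto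
    then have rS: "r k \<in> S k" unfolding r_def using fin by (intro Max_in) auto
    then show "m k \<le> r k" "H \<le> b (r k)" unfolding S_def by auto
    show "r k < M k" using rS below[of k] unfolding S_def by (cases "r k = M k") auto
    show "b (Suc (r k)) < H"
    proof (rule ccontr)
      assume "\<not> b (Suc (r k)) < H"
      then have "Suc (r k) \<in> S k" using rS \<open>r k < M k\<close> unfolding S_def by auto
      then show False using Max_ge[OF fin] unfolding r_def by fastforce
    qed
  qed
  have mono: "strict_mono r"
    using r(1,2) M_less_m by (intro strict_monoI_Suc) (meson le_trans less_imp_le_nat not_le)
  have "(\<lambda>k. c (r k) * H) \<longlonglongrightarrow> 1 * H"
    using LIMSEQ_subseq_LIMSEQ[OF c mono] by (intro tendsto_mult) (simp_all add: o_def)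
  moreover have "b (r k) \<le> c (r k) * H" for k
    using step[of "r k"] mult_left_mono[OF less_imp_le[OF r(4)] c_nonneg] by (rule order_trans)
  ultimately have "(\<lambda>k. b (r k)) \<longlonglongrightarrow> H"
    using r(3) by (intro tendsto_sandwich[of "\<lambda>_. H" "\<lambda>k. b (r k)" sequentially "\<lambda>k. c (r k) * H"])
      simp_all
  then show ?thesis using mono r(1) by blast
qed

section \<open>The distribution function of the self-similar measure\<close>

declare aseq.simps [simp del]

locale self_similar_cantor =
  fixes p s :: nat and A :: "nat set" and \<mu> :: "real measure"
  assumes s_ge_2: "2 \<le> s" and A_subset: "A \<subseteq> {0..<p}" and card_A: "card A = s"
    and self_similar: "self_similar_measure p s A \<mu>"
begin

abbreviation h :: "nat \<Rightarrow> nat" where "h \<equiv> hmap A"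

abbreviation \<theta> :: real where "\<theta> \<equiv> log (real s) (real p)"

lemma p_ge_2: "2 \<le> p"
  using card_mono[OF finite_atLeastLessThan A_subset] card_A s_ge_2 by simp

lemma finite_A: "finite A"
  using card_A s_ge_2 card.infinite by fastforce

lemma h_strict_mono: "i < j \<Longrightarrow> j < s \<Longrightarrow> h i < h j"
  unfolding hmap_def
  using sorted_wrt_nth_less[OF strict_sorted_list_of_set[of A]] finite_A card_A by simp

lemma h_mono: "i \<le> j \<Longrightarrow> j < s \<Longrightarrow> h i \<le> h j"
  using h_strict_mono[of i j] by (cases "i = j") auto

lemma h_mem_A: "i < s \<Longrightarrow> h i \<in> A"
  unfolding hmap_def using finite_A card_A
  by (metis length_sorted_list_of_set nth_mem set_sorted_list_of_set)

lemma h_less_p: "i < s \<Longrightarrow> h i < p"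
  using h_mem_A A_subset by fastforce

lemma h_surj: "d \<in> A \<Longrightarrow> \<exists>i<s. h i = d"
  unfolding hmap_def using finite_A card_A
  by (metis in_set_conv_nth length_sorted_list_of_set set_sorted_list_of_set)

lemma comp_h_less_p: "(\<And>i. e i < s) \<Longrightarrow> (h \<circ> e) i < p"
  by (simp add: h_less_p)

lemma cantor_set_eq: "cantor_set p A = {base_expansion p (h \<circ> e) | e. \<forall>i. e i < s}"
proof (intro set_eqI iffI)
  fix x assume "x \<in> cantor_set p A"
  then obtain d where d: "\<forall>i. d i \<in> A" and x: "x = base_expansion p d"
    unfolding cantor_set_def base_expansion_def by blast
  then have "\<forall>i. \<exists>j<s. h j = d i"
    using h_surj by blast
  then obtain e where "\<forall>i. e i < s \<and> h (e i) = d i"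
    by metis
  then have "\<forall>i. e i < s" and "h \<circ> e = d"
    by auto
  then show "x \<in> {base_expansion p (h \<circ> e) | e. \<forall>i. e i < s}"
    using x by blast
next
  fix x assume "x \<in> {base_expansion p (h \<circ> e) | e. \<forall>i. e i < s}"
  then obtain e where "\<forall>i. e i < s" and "x = base_expansion p (h \<circ> e)"
    by blast
  then show "x \<in> cantor_set p A"
    unfolding cantor_set_def base_expansion_def using h_mem_A by (auto intro!: exI[of _ "h \<circ> e"])
qed

lemma cantor_expansion_Suc:
  assumes "\<And>i. e i < s"
  shows "base_expansion p (h \<circ> e) = simil p A (e 0) (base_expansion p (h \<circ> (\<lambda>i. e (Suc i))))"
  using base_expansion_Suc[of p "h \<circ> e", OF p_ge_2 comp_h_less_p[of e, OF assms]]
  by (simp add: simil_def comp_def add.commute)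

lemma powr_theta_power: "(real s ^ k) powr \<theta> = real p ^ k"
proof -
  have "(real s ^ k) powr \<theta> = (real s powr \<theta>) powr real k"
    using s_ge_2 by (simp add: powr_realpow[symmetric] powr_powr mult.commute)
  also have "\<dots> = real p ^ k"
    using s_ge_2 p_ge_2 by (simp add: powr_realpow)
  finally show ?thesis .
qed

sublocale real_distribution \<mu>
  using self_similar
  unfolding self_similar_measure_def real_distribution_def real_distribution_axioms_def by auto

lemma cdf_self_similar: "cdf \<mu> y = (\<Sum>i<s. cdf \<mu> (real p * y - real (h i))) / real s"
proof -
  have "simil p A i -` {..y} = {..real p * y - real (h i)}" for i
    using p_ge_2 by (auto simp: simil_def field_simps)
  then show ?thesis
    using self_similar unfolding self_similar_measure_def cdf_def by simp
qed

lemma cdf_le_cdf_power_mult: "cdf \<mu> y \<le> cdf \<mu> (real p ^ k * y)"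
proof (induction k arbitrary: y)
  case (Suc k)
  have "(\<Sum>i<s. cdf \<mu> (real p * y - real (h i))) \<le> (\<Sum>i<s. cdf \<mu> (real p * y))"
    by (intro sum_mono cdf_nondecreasing) auto
  then have "cdf \<mu> y \<le> cdf \<mu> (real p * y)"
    using cdf_self_similar[of y] s_ge_2 by (simp add: divide_le_eq mult.commute)
  also have "\<dots> \<le> cdf \<mu> (real p ^ Suc k * y)"
    using Suc[of "real p * y"] by (simp add: ac_simps)
  finally show ?case .
qed simp

lemma cdf_one_plus_power_mult_le: "cdf \<mu> (1 + real p ^ k * z) \<le> cdf \<mu> (1 + z)"
proof (induction k arbitrary: z)
  case (Suc k)
  have "(\<Sum>i<s. cdf \<mu> (1 + real p * z)) \<le> (\<Sum>i<s. cdf \<mu> (real p * (1 + z) - real (h i)))"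
    using h_less_p by (intro sum_mono cdf_nondecreasing) (simp add: algebra_simps nat_less_real_le)
  then have "cdf \<mu> (1 + real p * z) \<le> cdf \<mu> (1 + z)"
    using cdf_self_similar[of "1 + z"] s_ge_2 by (simp add: le_divide_eq mult.commute)
  then show ?case
    using Suc[of "real p * z"] by (simp add: ac_simps)
qed simp

lemma cdf_eq_0_if_neg:
  assumes "y < 0"
  shows "cdf \<mu> y = 0"
proof -
  have "cdf \<mu> y \<le> 0 + \<epsilon>" if \<epsilon>: "0 < \<epsilon>" for \<epsilon>
  proof -
    obtain Z where Z: "\<And>z. z \<le> Z \<Longrightarrow> cdf \<mu> z < \<epsilon>"
      using order_tendstoD(2)[OF cdf_lim_at_bot \<epsilon>] by (auto simp: eventually_at_bot_linorder)
    obtain k where "Z / y < real p ^ k"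
      using real_arch_pow[of "real p" "Z / y"] p_ge_2 by auto
    then have "real p ^ k * y \<le> Z"
      using assms by (simp add: divide_less_eq)
    then show ?thesis
      using Z cdf_le_cdf_power_mult[of y k] by fastforce
  qed
  then have "cdf \<mu> y \<le> 0"
    by (rule field_le_epsilon)
  then show ?thesis
    using cdf_nonneg[of y] by simp
qed

lemma cdf_eq_1_if_gt_1:
  assumes "1 < y"
  shows "cdf \<mu> y = 1"
proof -
  have "1 \<le> cdf \<mu> y + \<epsilon>" if \<epsilon>: "0 < \<epsilon>" for \<epsilon>
  proof -
    obtain Z where Z: "\<And>z. Z \<le> z \<Longrightarrow> 1 - \<epsilon> < cdf \<mu> z"
      using order_tendstoD(1)[OF cdf_lim_at_top_prob, of "1 - \<epsilon>"] \<epsilon>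
      by (auto simp: eventually_at_top_linorder)
    obtain k where "(Z - 1) / (y - 1) < real p ^ k"
      using real_arch_pow[of "real p" "(Z - 1) / (y - 1)"] p_ge_2 by auto
    then have "Z \<le> 1 + real p ^ k * (y - 1)"
      using assms by (simp add: divide_less_eq algebra_simps)
    then show ?thesis
      using Z cdf_one_plus_power_mult_le[of k "y - 1"] by fastforce
  qed
  then have "1 \<le> cdf \<mu> y"
    by (rule field_le_epsilon)
  then show ?thesis
    using cdf_bounded_prob[of y] by simp
qed

lemma h0_add_2_le_p: "h 0 + 2 \<le> p"
  using h_strict_mono[of 0 "s - 1"] h_less_p[of "s - 1"] s_ge_2 by simp

lemma cdf_eq_1_if_ge_1:
  assumes "1 \<le> y"
  shows "cdf \<mu> y = 1"
proof (cases "y = 1")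
  case True
  obtain n where s: "s = Suc n"
    using s_ge_2 by (cases s) auto
  have "cdf \<mu> 1 \<le> cdf \<mu> (real p - real (h (Suc i)))" if "i < n" for i
    using h_less_p[of "Suc i"] that s by (intro cdf_nondecreasing) (simp add: nat_less_real_le)
  then have "real n * cdf \<mu> 1 \<le> (\<Sum>i<n. cdf \<mu> (real p - real (h (Suc i))))"
    using sum_mono[of "{..<n}" "\<lambda>_. cdf \<mu> 1"] by simp
  moreover have "cdf \<mu> (real p - real (h 0)) = 1"
    using h0_add_2_le_p by (intro cdf_eq_1_if_gt_1) simp
  moreover have "real s * cdf \<mu> 1 = (\<Sum>i<s. cdf \<mu> (real p - real (h i)))"
    using cdf_self_similar[of 1] s_ge_2 by simp
  ultimately have "1 + real n * cdf \<mu> 1 \<le> real s * cdf \<mu> 1"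
    unfolding s sum.lessThan_Suc_shift by linarith
  then show ?thesis
    using True cdf_bounded_prob[of 1] by (simp add: s algebra_simps)
qed (use assms cdf_eq_1_if_gt_1 in simp)

lemma cdf_0: "cdf \<mu> 0 = 0"
proof -
  obtain n where s: "s = Suc n"
    using s_ge_2 by (cases s) auto
  have "cdf \<mu> (- real (h (Suc i))) = 0" if "i < n" for i
    using h_strict_mono[of 0 "Suc i"] that s by (intro cdf_eq_0_if_neg) simp
  moreover have "cdf \<mu> (- real (h 0)) \<le> cdf \<mu> 0"
    by (intro cdf_nondecreasing) simp
  moreover have "real s * cdf \<mu> 0 = (\<Sum>i<s. cdf \<mu> (- real (h i)))"
    using cdf_self_similar[of 0] s_ge_2 by simp
  ultimately have "real s * cdf \<mu> 0 \<le> cdf \<mu> 0"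
    unfolding s sum.lessThan_Suc_shift by simp
  moreover have "2 * cdf \<mu> 0 \<le> real s * cdf \<mu> 0"
    using s_ge_2 cdf_nonneg[of 0] by (intro mult_right_mono) auto
  ultimately show ?thesis
    using cdf_nonneg[of 0] by linarith
qed

lemma cdf_simil:
  assumes "j < s" and "0 \<le> y" and "y \<le> 1"
  shows "cdf \<mu> (simil p A j y) = (real j + cdf \<mu> y) / real s"
proof -
  have "cdf \<mu> (y + real (h j) - real (h i))
      = (if i < j then 1 else 0) + (if i = j then cdf \<mu> y else 0)" if "i < s" for i
  proof (cases i j rule: linorder_cases)
    case less
    then have "h i < h j" using h_strict_mono assms(1) by blast
    then show ?thesis using less assms(2) by (intro cdf_eq_1_if_ge_1 [THEN trans]) auto
  next
    case greater
    then have "h j < h i" using h_strict_mono that by blast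
    then have "cdf \<mu> (y + real (h j) - real (h i)) \<le> cdf \<mu> 0"
      using assms(3) by (intro cdf_nondecreasing) simp
    then show ?thesis using greater cdf_0 cdf_nonneg by (simp add: order_antisym)
  qed simp
  moreover have "(\<Sum>i<s. if i < j then 1 else 0 :: real) = real j"
  proof -
    have "{i \<in> {..<s}. i < j} = {..<j}"
      using assms(1) by auto
    then show ?thesis
      by (simp add: sum.inter_filter[symmetric])
  qed
  ultimately have "(\<Sum>i<s. cdf \<mu> (y + real (h j) - real (h i))) = real j + cdf \<mu> y"
    using assms(1) by (simp add: sum.distrib)
  then show ?thesis
    using cdf_self_similar[of "simil p A j y"] p_ge_2 by (simp add: simil_def)
qed

lemma cdf_h1_over_p: "cdf \<mu> (real (h 1) / real p) = 1 / real s"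
  using cdf_simil[of 1 0] s_ge_2 cdf_0 by (simp add: simil_def)

lemma cdf_base_expansion:
  assumes "\<And>i. e i < s"
  shows "cdf \<mu> (base_expansion p (h \<circ> e)) = base_expansion s e"
proof -
  have bound: "\<bar>cdf \<mu> (base_expansion p (h \<circ> e)) - base_expansion s e\<bar> \<le> 1 / real s ^ k"
    if "\<And>i. e i < s" for e k
    using that
  proof (induction k arbitrary: e)
    case 0
    then show ?case
      using base_expansion_nonneg[of s e] base_expansion_le_1[of s e] s_ge_2
        cdf_nonneg[of "base_expansion p (h \<circ> e)"] cdf_bounded_prob[of "base_expansion p (h \<circ> e)"]
      by (simp add: abs_le_iff comp_def)
  next
    case (Suc k)
    define e' where "e' = (\<lambda>i. e (Suc i))"
    have e': "\<And>i. e' i < s"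
      using Suc.prems unfolding e'_def by simp
    have "0 \<le> base_expansion p (h \<circ> e')" and "base_expansion p (h \<circ> e') \<le> 1"
      using base_expansion_nonneg[of p "h \<circ> e'"] base_expansion_le_1[of p "h \<circ> e'"]
        p_ge_2 comp_h_less_p[of e', OF e'] by auto
    then have "cdf \<mu> (base_expansion p (h \<circ> e))
        = (real (e 0) + cdf \<mu> (base_expansion p (h \<circ> e'))) / real s"
      using cantor_expansion_Suc[of e, OF Suc.prems] cdf_simil[OF Suc.prems[of 0]]
      unfolding e'_def by simp
    moreover have "base_expansion s e = (real (e 0) + base_expansion s e') / real s"
      using base_expansion_Suc[of s e] s_ge_2 Suc.prems unfolding e'_def by simp
    ultimately have "\<bar>cdf \<mu> (base_expansion p (h \<circ> e)) - base_expansion s e\<bar>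
        = \<bar>cdf \<mu> (base_expansion p (h \<circ> e')) - base_expansion s e'\<bar> / real s"
      using s_ge_2 by (simp add: diff_divide_distrib[symmetric])
    also have "\<dots> \<le> (1 / real s ^ k) / real s"
      using Suc.IH[of e', OF e'] s_ge_2 by (intro divide_right_mono) (auto simp: comp_def)
    finally show ?case
      by (simp add: ac_simps comp_def)
  qed
  have "(\<lambda>k. 1 / real s ^ k) \<longlonglongrightarrow> 0"
    using s_ge_2 by (intro LIMSEQ_divide_realpow_zero) auto
  then have "\<bar>cdf \<mu> (base_expansion p (h \<circ> e)) - base_expansion s e\<bar> \<le> 0"
    by (rule LIMSEQ_le_const) (use bound[of e, OF assms] in blast)
  then show ?thesis
    by simp
qed

lemma measure_atLeastAtMost_eq_cdf:
  assumes "0 \<le> x"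
  shows "measure \<mu> {0..x} = cdf \<mu> x"
proof -
  have "{0..x} = {..x} - {..<0}"
    using assms by auto
  moreover have "measure \<mu> ({..x} - {..<0}) = measure \<mu> {..x} - measure \<mu> {..<0}"
    by (rule finite_measure_Diff) (use assms in auto)
  ultimately have "measure \<mu> {0..x} = cdf \<mu> x - measure \<mu> {..<0}"
    unfolding cdf_def by simp
  moreover have "measure \<mu> {..<0} \<le> cdf \<mu> 0"
    unfolding cdf_def by (intro finite_measure_mono) auto
  ultimately show ?thesis
    using cdf_0 measure_nonneg[of \<mu> "{..<0}"] by simp
qed

section \<open>The sequence b along digit prefixes\<close>

lemma aseq_eq: "0 < n \<Longrightarrow> aseq p s A n = h (n mod s) + p * aseq p s A (n div s)"
  using s_ge_2 by (subst aseq.simps) simp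

lemma aseq_0: "aseq p s A 0 = 0"
  by (subst aseq.simps) simp

lemma aseq_prefix_value:
  assumes "\<And>i. e i < s" and "1 \<le> e 0"
  shows "aseq p s A (prefix_value s e k) = prefix_value p (h \<circ> e) k"
proof (induction k)
  case 0
  show ?case
    using assms aseq_eq[of "e 0"] by (simp add: aseq_0)
next
  case (Suc k)
  have "0 < prefix_value s e k"
    using prefix_value_pos assms(2) s_ge_2 by simp
  then show ?case
    using assms(1)[of "Suc k"] aseq_eq[of "prefix_value s e (Suc k)"] Suc s_ge_2 by simp
qed

lemma bseq_prefix_value:
  assumes "\<And>i. e i < s" and "1 \<le> e 0"
  shows "bseq p s A (prefix_value s e k)
    = (real (prefix_value p (h \<circ> e) k) / real p ^ Suc k)
      / (real (prefix_value s e k) / real s ^ Suc k) powr \<theta>"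
proof -
  define T where "T = real (prefix_value s e k) / real s ^ Suc k"
  have "0 < T"
    unfolding T_def using prefix_value_pos[of s e k] assms(2) s_ge_2 by simp
  have "real (prefix_value s e k) powr \<theta> = (T * real s ^ Suc k) powr \<theta>"
    unfolding T_def using s_ge_2 by simp
  also have "\<dots> = T powr \<theta> * (real s ^ Suc k) powr \<theta>"
    by (rule powr_mult)
  also have "\<dots> = T powr \<theta> * real p ^ Suc k"
    by (simp only: powr_theta_power)
  finally show ?thesis
    unfolding bseq_def aseq_prefix_value[of e k, OF assms] T_def[symmetric]
    using p_ge_2 by (simp add: field_simps)
qed

lemma bseq_prefix_value_tendsto:
  assumes E: "\<And>j i. E j i < s" and E0: "\<And>j. 1 \<le> E j 0"
    and e: "\<And>i. e i < s" and e0: "1 \<le> e 0"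
    and agree: "\<And>m. eventually (\<lambda>j. \<forall>i<m. E j i = e i) sequentially"
    and K: "filterlim K at_top sequentially"
  shows "(\<lambda>j. bseq p s A (prefix_value s (E j) (K j)))
    \<longlonglongrightarrow> base_expansion p (h \<circ> e) / cdf \<mu> (base_expansion p (h \<circ> e)) powr \<theta>"
proof -
  have agree_h: "eventually (\<lambda>j. \<forall>i<m. (h \<circ> E j) i = (h \<circ> e) i) sequentially" for m
    using agree[of m] by eventually_elim simp
  have X: "(\<lambda>j. real (prefix_value p (h \<circ> E j) (K j)) / real p ^ Suc (K j))
      \<longlonglongrightarrow> base_expansion p (h \<circ> e)"
    by (rule prefix_value_tendsto[OF p_ge_2 _ _ agree_h K]) (simp_all add: E e h_less_p)
  have T: "(\<lambda>j. real (prefix_value s (E j) (K j)) / real s ^ Suc (K j)) \<longlonglongrightarrow> base_expansion s e"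
    by (rule prefix_value_tendsto[OF s_ge_2 E e agree K])
  have "0 < real (e 0) / real s"
    using e0 s_ge_2 by simp
  then have "0 < base_expansion s e"
    using base_expansion_ge_first_digit[of s e, OF s_ge_2 e] by linarith
  then have "(\<lambda>j. real (prefix_value p (h \<circ> E j) (K j)) / real p ^ Suc (K j)
      / (real (prefix_value s (E j) (K j)) / real s ^ Suc (K j)) powr \<theta>)
    \<longlonglongrightarrow> base_expansion p (h \<circ> e) / base_expansion s e powr \<theta>"
    using X T by (intro tendsto_divide tendsto_powr tendsto_const) simp_all
  moreover have "bseq p s A (prefix_value s (E j) (K j))
      = real (prefix_value p (h \<circ> E j) (K j)) / real p ^ Suc (K j)
        / (real (prefix_value s (E j) (K j)) / real s ^ Suc (K j)) powr \<theta>" for j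
    using bseq_prefix_value[of "E j", OF E E0] .
  ultimately show ?thesis
    by (simp only: cdf_base_expansion[of e, OF e])
qed

lemma cantor_quotient_mem_accumulation_points:
  assumes e: "\<And>i. e i < s" and e0: "1 \<le> e 0"
  shows "base_expansion p (h \<circ> e) / cdf \<mu> (base_expansion p (h \<circ> e)) powr \<theta>
    \<in> accumulation_points (bseq p s A)"
proof -
  have "eventually (\<lambda>j. \<forall>i<m. e i = e i) sequentially" for m
    by simp
  then have "(\<lambda>j. bseq p s A (prefix_value s e j))
      \<longlonglongrightarrow> base_expansion p (h \<circ> e) / cdf \<mu> (base_expansion p (h \<circ> e)) powr \<theta>"
    using bseq_prefix_value_tendsto[where E = "\<lambda>_. e" and e = e and K = "\<lambda>j. j",
        OF e e0 e e0 _ filterlim_ident]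
    by blast
  moreover have "1 \<le> prefix_value s e j" for j
    using prefix_value_pos[of s e j] e0 s_ge_2 by simp
  ultimately show ?thesis
    unfolding accumulation_points_def using strict_mono_prefix_value[of s e, OF s_ge_2 e0] by blast
qed

lemma accumulation_point_eq_cantor_quotient:
  assumes "L \<in> accumulation_points (bseq p s A)"
  obtains e where "\<And>i. e i < s" and "1 \<le> e 0"
    and "L = base_expansion p (h \<circ> e) / cdf \<mu> (base_expansion p (h \<circ> e)) powr \<theta>"
proof -
  obtain r where r: "strict_mono r" "\<And>k. 1 \<le> r k" "(\<lambda>k. bseq p s A (r k)) \<longlonglongrightarrow> L"
    using assms unfolding accumulation_points_def by blast
  have "\<exists>d k. (\<forall>i. d i < s) \<and> 1 \<le> d 0 \<and> prefix_value s d k = r j" for j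
    using prefix_value_exists[OF s_ge_2 r(2)[of j]] .
  then obtain E K where E: "\<And>j i. E j i < s" "\<And>j. 1 \<le> E j 0"
    and EK: "\<And>j. prefix_value s (E j) (K j) = r j"
    by metis
  obtain q e where q: "strict_mono q" and agree: "\<And>i j. i < j \<Longrightarrow> E (q j) i = e i"
    using subseq_with_stable_prefixes[of E s, OF E(1)] by blast
  have e: "e i < s" for i
    using agree[of i "Suc i"] E(1)[of "q (Suc i)" i] by simp
  have e0: "1 \<le> e 0"
    using agree[of 0 1] E(2)[of "q 1"] by simp
  have agree_ev: "eventually (\<lambda>j. \<forall>i<m. E (q j) i = e i) sequentially" for m
    unfolding eventually_sequentially using agree by (intro exI[of _ m]) auto
  have Kq: "filterlim (\<lambda>j. K (q j)) at_top sequentially"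
    unfolding filterlim_at_top eventually_sequentially
  proof (intro allI exI impI)
    fix Z j
    assume "s ^ Z \<le> j"
    also have "j \<le> r (q j)"
      using seq_suble[OF q, of j] seq_suble[OF r(1), of "q j"] by simp
    also have "r (q j) < s ^ Suc (K (q j))"
      using prefix_value_less[of "E (q j)" s "K (q j)", OF E(1)] EK[of "q j"] by simp
    finally have "s ^ Z < s ^ Suc (K (q j))" .
    then have "Z < Suc (K (q j))"
      by (rule power_less_imp_less_exp[of s, rotated]) (use s_ge_2 in simp)
    then show "Z \<le> K (q j)"
      by simp
  qed
  have "(\<lambda>j. bseq p s A (prefix_value s (E (q j)) (K (q j))))
      \<longlonglongrightarrow> base_expansion p (h \<circ> e) / cdf \<mu> (base_expansion p (h \<circ> e)) powr \<theta>"
    using bseq_prefix_value_tendsto[where E = "\<lambda>j. E (q j)" and K = "\<lambda>j. K (q j)",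
        OF E(1) E(2) e e0 agree_ev Kq] .
  then have "(\<lambda>j. bseq p s A (r (q j)))
      \<longlonglongrightarrow> base_expansion p (h \<circ> e) / cdf \<mu> (base_expansion p (h \<circ> e)) powr \<theta>"
    by (simp only: EK)
  moreover have "(\<lambda>j. bseq p s A (r (q j))) \<longlonglongrightarrow> L"
    using LIMSEQ_subseq_LIMSEQ[OF r(3) q] by (simp add: o_def)
  ultimately have "L = base_expansion p (h \<circ> e) / cdf \<mu> (base_expansion p (h \<circ> e)) powr \<theta>"
    using LIMSEQ_unique by blast
  then show ?thesis
    using that[of e] e e0 by blast
qed

section \<open>The left endpoint h(1)/p\<close>

lemma aseq_less_Suc: "aseq p s A n < aseq p s A (Suc n)"
proof (induction n rule: less_induct)
  case (less n)
  show ?case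
  proof (cases "n = 0")
    case True
    then show ?thesis
      using h_strict_mono[of 0 1] s_ge_2 by (simp add: aseq_eq aseq_0)
  next
    case False
    show ?thesis
    proof (cases "Suc (n mod s) = s")
      case True
      then have "Suc n mod s = 0" and "Suc n div s = Suc (n div s)"
        by (simp_all add: mod_Suc div_Suc)
      have "aseq p s A (n div s) < aseq p s A (Suc (n div s))"
        using False s_ge_2 by (intro less.IH) simp
      then have "p * Suc (aseq p s A (n div s)) \<le> p * aseq p s A (Suc (n div s))"
        by (intro mult_le_mono2) simp
      moreover have "h (n mod s) < p"
        using s_ge_2 by (intro h_less_p) simp
      ultimately show ?thesis
        using False \<open>Suc n mod s = 0\<close> \<open>Suc n div s = Suc (n div s)\<close>
          aseq_eq[of n] aseq_eq[of "Suc n"] by simp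
    next
      case False
      then have "Suc n mod s = Suc (n mod s)" and "Suc n div s = n div s"
        by (simp_all add: mod_Suc div_Suc)
      moreover have "h (n mod s) < h (Suc (n mod s))"
        using False s_ge_2 by (intro h_strict_mono) (auto simp: Suc_lessI)
      ultimately show ?thesis
        using \<open>n \<noteq> 0\<close> aseq_eq[of n] aseq_eq[of "Suc n"] by simp
    qed
  qed
qed

lemma aseq_less_power:
  assumes "n < s ^ Suc k"
  shows "aseq p s A n < p ^ Suc k"
proof (cases "n = 0")
  case True
  then show ?thesis
    using p_ge_2 by (simp add: aseq_0)
next
  case False
  then obtain e j where e: "\<forall>i. e i < s" "1 \<le> e 0" and n: "prefix_value s e j = n"
    using prefix_value_exists[OF s_ge_2, of n] by auto
  have "s ^ j \<le> n"
    using prefix_value_ge[of e s j] mult_le_mono1[OF e(2), of "s ^ j"] n by linarith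
  then have "s ^ j < s ^ Suc k"
    using assms by linarith
  then have "j < Suc k"
    by (rule power_less_imp_less_exp[of s, rotated]) (use s_ge_2 in simp)
  have "aseq p s A n = prefix_value p (h \<circ> e) j"
    using aseq_prefix_value[of e j] e n by simp
  also have "\<dots> < p ^ Suc j"
    using e h_less_p by (intro prefix_value_less) simp
  also have "\<dots> \<le> p ^ Suc k"
    using \<open>j < Suc k\<close> p_ge_2 by (intro power_increasing) auto
  finally show ?thesis .
qed

lemma h1_le_bseq_power: "real (h 1) \<le> bseq p s A (s ^ k)"
proof -
  define e :: "nat \<Rightarrow> nat" where "e i = (if i = 0 then 1 else 0)" for i
  have e: "\<And>i. e i < s" "1 \<le> e 0"
    using s_ge_2 unfolding e_def by auto
  have "h 1 * p ^ k \<le> aseq p s A (s ^ k)"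
    using aseq_prefix_value[of e k, OF e] prefix_value_ge[of "h \<circ> e" p k] prefix_value_unit[of s k]
    unfolding e_def by simp
  then have "real (h 1) * real p ^ k \<le> real (aseq p s A (s ^ k))"
    by (metis of_nat_le_iff of_nat_mult of_nat_power)
  then show ?thesis
    unfolding bseq_def using powr_theta_power[of k] p_ge_2 by (simp add: le_divide_eq)
qed

lemma bseq_le_Suc: "bseq p s A n \<le> (real (Suc n) / real n) powr \<theta> * bseq p s A (Suc n)"
proof (cases "n = 0")
  case True
  then show ?thesis by (simp add: bseq_def aseq_0)
next
  case False
  have "bseq p s A n \<le> real (aseq p s A (Suc n)) / real n powr \<theta>"
    unfolding bseq_def using aseq_less_Suc[of n] by (intro divide_right_mono) auto
  also have "\<dots> = (real (Suc n) / real n) powr \<theta> * bseq p s A (Suc n)"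
    unfolding bseq_def using False by (simp add: powr_divide)
  finally show ?thesis .
qed

lemma bseq_less_before_power:
  assumes "Suc n = s ^ Suc k"
  shows "bseq p s A n < (real (Suc n) / real n) powr \<theta>"
proof -
  have "s ^ 1 \<le> s ^ Suc k"
    using s_ge_2 by (intro power_increasing) auto
  then have "0 < n"
    using assms s_ge_2 by (simp only: power_one_right)
  have "aseq p s A n < p ^ Suc k"
    using assms by (intro aseq_less_power) simp
  then have "real (aseq p s A n) < real p ^ Suc k"
    by (metis of_nat_less_iff of_nat_power)
  also have "\<dots> = real (Suc n) powr \<theta>"
    using powr_theta_power[of "Suc k"] assms by (metis of_nat_power)
  finally show ?thesis
    unfolding bseq_def using \<open>0 < n\<close> by (simp add: powr_divide divide_strict_right_mono)
qed

lemma h1_mem_accumulation_points: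
  assumes "2 \<le> h 1"
  shows "real (h 1) \<in> accumulation_points (bseq p s A)"
proof -
  define c where "c n = (real (Suc n) / real n) powr \<theta>" for n
  have c: "c \<longlonglongrightarrow> 1"
    unfolding c_def using tendsto_powr[OF LIMSEQ_Suc_n_over_n tendsto_const, of \<theta>] by simp
  have "strict_mono (\<lambda>k. s ^ Suc k - 1)"
    using s_ge_2 by (intro strict_monoI_Suc diff_less_mono power_strict_increasing) auto
  then have "(\<lambda>k. c (s ^ Suc k - 1)) \<longlonglongrightarrow> 1"
    using LIMSEQ_subseq_LIMSEQ[OF c] by (simp add: o_def)
  then have "eventually (\<lambda>k. c (s ^ Suc k - 1) < real (h 1)) sequentially"
    using assms by (intro order_tendstoD(2)) auto
  then obtain K0 where K0: "\<And>k. K0 \<le> k \<Longrightarrow> c (s ^ Suc k - 1) < real (h 1)"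
    unfolding eventually_sequentially by blast
  have pos: "1 \<le> s ^ j" for j
    using s_ge_2 by simp
  have "\<exists>r. strict_mono r \<and> (\<forall>k. s ^ (k + K0) \<le> r k) \<and> (\<lambda>k. bseq p s A (r k)) \<longlonglongrightarrow> real (h 1)"
  proof (rule tendsto_last_point_above[where c = c and m = "\<lambda>k. s ^ (k + K0)"
        and M = "\<lambda>k. s ^ Suc (k + K0) - 1"])
    show "c \<longlonglongrightarrow> 1"
      by (rule c)
    show "0 \<le> c n" for n
      unfolding c_def by simp
    show "bseq p s A n \<le> c n * bseq p s A (Suc n)" for n
      unfolding c_def by (rule bseq_le_Suc)
    show "real (h 1) \<le> bseq p s A (s ^ (k + K0))" for k
      by (rule h1_le_bseq_power)
    show "bseq p s A (s ^ Suc (k + K0) - 1) < real (h 1)" for k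
      using bseq_less_before_power[of "s ^ Suc (k + K0) - 1" "k + K0"] K0[of "k + K0"]
        pos[of "Suc (k + K0)"]
      unfolding c_def by simp
    show "s ^ (k + K0) \<le> s ^ Suc (k + K0) - 1" for k
      using mult_le_mono1[OF s_ge_2, of "s ^ (k + K0)"] pos[of "k + K0"]
      unfolding power_Suc by linarith
    show "s ^ Suc (k + K0) - 1 < s ^ (Suc k + K0)" for k
      using pos[of "Suc (k + K0)"] by simp
  qed
  then obtain r where "strict_mono r" and r_ge: "\<And>k. s ^ (k + K0) \<le> r k"
    and "(\<lambda>k. bseq p s A (r k)) \<longlonglongrightarrow> real (h 1)"
    by blast
  moreover have "1 \<le> r k" for k
    using r_ge[of k] pos[of "k + K0"] by linarith
  ultimately show ?thesis
    unfolding accumulation_points_def by blast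
qed

lemma quotient_mem_accumulation_points:
  assumes x: "x \<in> cantor_set p A" and h1_le: "real (h 1) / real p \<le> x"
  shows "x / cdf \<mu> x powr \<theta> \<in> accumulation_points (bseq p s A)"
proof -
  obtain e where e: "\<And>i. e i < s" and xe: "x = base_expansion p (h \<circ> e)"
    using x cantor_set_eq by auto
  show ?thesis
  proof (cases "e 0 = 0")
    case False
    then show ?thesis
      using cantor_quotient_mem_accumulation_points[of e, OF e] xe by simp
  next
    case True
    have "x = (base_expansion p (h \<circ> (\<lambda>i. e (Suc i))) + real (h 0)) / real p"
      using cantor_expansion_Suc[of e, OF e] True xe by (simp add: simil_def)
    moreover have "base_expansion p (h \<circ> (\<lambda>i. e (Suc i))) \<le> 1"
      using base_expansion_le_1[of p "h \<circ> (\<lambda>i. e (Suc i))"] p_ge_2 e h_less_p by simp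
    moreover have "real (h 0) + 1 \<le> real (h 1)"
      using h_strict_mono[of 0 1] s_ge_2 by (simp add: nat_less_real_le)
    ultimately have "x \<le> real (h 1) / real p"
      using p_ge_2 by (simp add: divide_right_mono)
    then have x_eq: "x = real (h 1) / real p"
      using h1_le by simp
    have "(1 / real s) powr \<theta> = 1 / real p"
      using powr_theta_power[of 1] by (simp add: powr_divide)
    then have quotient: "x / cdf \<mu> x powr \<theta> = real (h 1)"
      using x_eq cdf_h1_over_p p_ge_2 by simp
    show ?thesis
    proof (cases "2 \<le> h 1")
      case True
      then show ?thesis
        using quotient h1_mem_accumulation_points by simp
    next
      case False
      then have "h 0 = 0" and "h 1 = 1"
        using h_strict_mono[of 0 1] s_ge_2 by auto
      define e1 :: "nat \<Rightarrow> nat" where "e1 i = (if i = 0 then 1 else 0)" for i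
      have e1: "\<And>i. e1 i < s" "1 \<le> e1 0"
        using s_ge_2 unfolding e1_def by auto
      have "base_expansion p (h \<circ> e1) = x"
        using cantor_expansion_Suc[of e1, OF e1(1)] base_expansion_const[OF p_ge_2, of 0]
          \<open>h 0 = 0\<close> \<open>h 1 = 1\<close> x_eq
        by (simp add: e1_def comp_def simil_def)
      then show ?thesis
        using cantor_quotient_mem_accumulation_points[of e1, OF e1] by simp
    qed
  qed
qed

lemma accumulation_points_eq:
  "accumulation_points (bseq p s A)
    = {x / cdf \<mu> x powr \<theta> | x. x \<in> cantor_set p A \<inter> {real (h 1) / real p .. 1}}"
proof (intro set_eqI iffI)
  fix L
  assume "L \<in> accumulation_points (bseq p s A)"
  then obtain e where e: "\<And>i. e i < s" "1 \<le> e 0"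
    and L: "L = base_expansion p (h \<circ> e) / cdf \<mu> (base_expansion p (h \<circ> e)) powr \<theta>"
    using accumulation_point_eq_cantor_quotient by blast
  have "base_expansion p (h \<circ> e) \<in> cantor_set p A"
    using cantor_set_eq e(1) by blast
  moreover have "real (h 1) / real p \<le> real (h (e 0)) / real p"
    using h_mono[of 1 "e 0"] e by (simp add: divide_right_mono)
  then have "real (h 1) / real p \<le> base_expansion p (h \<circ> e)"
    using base_expansion_ge_first_digit[of p "h \<circ> e", OF p_ge_2 comp_h_less_p[of e, OF e(1)]]
    by simp
  moreover have "base_expansion p (h \<circ> e) \<le> 1"
    using base_expansion_le_1[of p "h \<circ> e", OF p_ge_2 comp_h_less_p[of e, OF e(1)]] .
  ultimately show "L \<in> {x / cdf \<mu> x powr \<theta> | x. x \<in> cantor_set p A \<inter> {real (h 1) / real p .. 1}}"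
    using L by (intro CollectI exI[of _ "base_expansion p (h \<circ> e)"]) simp
next
  fix L
  assume "L \<in> {x / cdf \<mu> x powr \<theta> | x. x \<in> cantor_set p A \<inter> {real (h 1) / real p .. 1}}"
  then show "L \<in> accumulation_points (bseq p s A)"
    using quotient_mem_accumulation_points by auto
qed

end

theorem theorem1:
  fixes p s :: nat and A :: "nat set" and \<mu> :: "real measure"
  assumes "p \<ge> 3" and "2 \<le> s" and "s < p"
    and "A \<subseteq> {0..<p}" and "card A = s"
    and "self_similar_measure p s A \<mu>"
  shows "{x / (measure \<mu> {0..x}) powr (log (real s) (real p)) | x.
            x \<in> cantor_set p A \<inter> {real (hmap A 1) / real p .. 1}}
         = accumulation_points (bseq p s A)"
proof -
  interpret self_similar_cantor p s A \<mu>
    using assms(2,4-6) by unfold_locales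
  let ?S = "cantor_set p A \<inter> {real (h 1) / real p .. 1}"
  have "measure \<mu> {0..x} = cdf \<mu> x" if "x \<in> ?S" for x
  proof (rule measure_atLeastAtMost_eq_cdf)
    have "real (h 1) / real p \<le> x"
      using that by simp
    then show "0 \<le> x"
      by (rule order_trans[rotated]) simp
  qed
  then have "(\<lambda>x. x / measure \<mu> {0..x} powr \<theta>) ` ?S = (\<lambda>x. x / cdf \<mu> x powr \<theta>) ` ?S"
    by (intro image_cong) simp_all
  then show ?thesis
    unfolding accumulation_points_eq Setcompr_eq_image .
qed

end
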